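(* Let $\mathcal{P}_1,\dots,\mathcal{P}_k$ be finite posets with $p_j=|\mathcal{P}_j|$ and $r\ge1$. The set $\mathcal{N}_{\le r}$ is closed. Equivalently, for any $\mathbf{T}\in\mathbb{R}^{p_1\times\cdots\times p_k}$ the infimum $\inf_{\boldsymbol\theta\in\mathcal{N}_{\le r}}\Vert\mathbf{T}-\boldsymbol\theta\Vert_F$ is attained by some $\boldsymbol\theta\in\mathcal{N}_{\le r}$.
   Context: For a finite poset $\mathcal{Q}$, the order cone $\mathcal{C}(\mathcal{Q})$ is the set of $\mathbf{f}\in\mathbb{R}^{\mathcal{Q}}$ with $f_x\ge0$ for all $x$ and $f_x\le f_y$ whenever $x\preceq y$. $\mathcal{N}_{\le r}$ is the set of tensors in $\mathbb{R}^{\mathcal{P}_1\times\cdots\times\mathcal{P}_k}\cong\mathbb{R}^{p_1\times\cdots\times p_k}$ of the form $\sum_{i=1}^r\otimes_{j=1}^k\mathbf{v}^{(ij)}$ with $\mathbf{v}^{(ij)}\in\mathcal{C}(\mathcal{P}_j)$. $\Vert\cdot\Vert_F$ is the Frobenius norm, $\Vert\mathbf{T}\Vert_F^2=\sum_{i_1,\dots,i_k}T_{i_1\dots i_k}^2$. *)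

theory Defs
  imports "HOL-Analysis.Analysis"
begin

definition order_cone :: "'a set \<Rightarrow> ('a \<times> 'a) set \<Rightarrow> ('a \<Rightarrow> real) set" where
  "order_cone Q le = {f. f \<in> extensional Q \<and> (\<forall>x\<in>Q. 0 \<le> f x) \<and>
                         (\<forall>x\<in>Q. \<forall>y\<in>Q. (x, y) \<in> le \<longrightarrow> f x \<le> f y)}"

definition tensor_idx :: "nat \<Rightarrow> (nat \<Rightarrow> 'a set) \<Rightarrow> (nat \<Rightarrow> 'a) set" where
  "tensor_idx k P = PiE {..<k} P"

definition tensors :: "nat \<Rightarrow> (nat \<Rightarrow> 'a set) \<Rightarrow> ((nat \<Rightarrow> 'a) \<Rightarrow> real) set" where
  "tensors k P = extensional (tensor_idx k P)"

definition N_le :: "nat \<Rightarrow> (nat \<Rightarrow> 'a set) \<Rightarrow> (nat \<Rightarrow> ('a \<times> 'a) set) \<Rightarrow> nat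
                     \<Rightarrow> ((nat \<Rightarrow> 'a) \<Rightarrow> real) set" where
  "N_le k P le r = {\<theta>. \<exists>v :: nat \<Rightarrow> nat \<Rightarrow> 'a \<Rightarrow> real.
      (\<forall>i<r. \<forall>j<k. v i j \<in> order_cone (P j) (le j)) \<and>
      \<theta> = (\<lambda>x. if x \<in> tensor_idx k P then (\<Sum>i<r. \<Prod>j<k. v i j (x j)) else 0)}"

definition frob :: "nat \<Rightarrow> (nat \<Rightarrow> 'a set) \<Rightarrow> ((nat \<Rightarrow> 'a) \<Rightarrow> real) \<Rightarrow> real" where
  "frob k P T = sqrt (\<Sum>x\<in>tensor_idx k P. (T x)\<^sup>2)"

end

theory Submission
  imports Defs
begin

text \<open>
  \<open>N_le\<close> is the image of a product of order cones under the continuous map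
  \<open>outer_product_sum\<close>, but that product is not compact. Since all factors are nonnegative,
  every rank-one term of an element of \<open>N_le\<close> is dominated entrywise by the element itself,
  and a rank-one term with entries at most \<open>M\<close> can be rewritten, by rescaling its factors,
  with all factors bounded by \<open>max 1 M\<close>. So the elements of \<open>N_le\<close> bounded by \<open>M\<close> lie in
  a compact subset of \<open>N_le\<close>. Near any point, \<open>N_le\<close> therefore agrees with a compact set, so
  it is closed; and the distance to \<open>T\<close> attains its infimum because its sublevel sets in
  \<open>N_le\<close> are bounded, hence contained in such a compact set.
\<close>

lemma compact_PiE_fun:
  fixes S :: "'b \<Rightarrow> 'c::topological_space set"
  assumes "\<And>i. i \<in> I \<Longrightarrow> compact (S i)"
  shows "compact (PiE I S)"
proof -
  have "PiE I S = PiE UNIV (\<lambda>i. if i \<in> I then S i else {undefined})"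
    by (auto simp: PiE_iff extensional_def) (metis, metis singletonD)
  moreover have "compactin (product_topology (\<lambda>_. euclidean) UNIV)
      (PiE UNIV (\<lambda>i. if i \<in> I then S i else {undefined}))"
    using assms by (simp add: compactin_PiE)
  ultimately show ?thesis
    by (simp add: euclidean_product_topology compactin_euclidean_iff)
qed

lemma compact_imp_closed_fun:
  fixes S :: "('b \<Rightarrow> 'c::metric_space) set"
  assumes "compact S"
  shows "closed S"
proof -
  have "Hausdorff_space (euclidean :: ('b \<Rightarrow> 'c) topology)"
    by (metis euclidean_product_topology Hausdorff_space_product_topology
        Hausdorff_space_euclidean)
  moreover have "compactin euclidean S"
    using assms by (simp only: compactin_euclidean_iff)
  ultimately have "closedin euclidean S"
    by (rule compactin_imp_closedin)
  then show ?thesis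
    by (simp only: closed_closedin)
qed

lemma closed_if_locally_closed:
  assumes "\<And>x. x \<notin> N \<Longrightarrow> \<exists>U C. open U \<and> x \<in> U \<and> closed C \<and> N \<inter> U \<subseteq> C \<and> C \<subseteq> N"
  shows "closed N"
proof -
  have "open (- N)"
  proof (rule Topological_Spaces.openI)
    fix x assume x: "x \<in> - N"
    then have "\<exists>U C. open U \<and> x \<in> U \<and> closed C \<and> N \<inter> U \<subseteq> C \<and> C \<subseteq> N"
      using assms by simp
    then obtain U C where UC: "open U" "x \<in> U" "closed C" "N \<inter> U \<subseteq> C" "C \<subseteq> N"
      by blast
    show "\<exists>V. open V \<and> x \<in> V \<and> V \<subseteq> - N"
    proof (intro exI conjI)
      show "open (U - C)"
        using UC by (intro open_Diff)
      show "x \<in> U - C" "U - C \<subseteq> - N"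
        using UC x by blast+
    qed
  qed
  then show ?thesis
    by (simp add: closed_def)
qed

lemma attains_Inf_if_compact_sublevel:
  fixes d :: "'b::topological_space \<Rightarrow> real"
  assumes "compact S" "S \<subseteq> N" "continuous_on S d" "a \<in> S"
    and sublevel: "\<And>x. x \<in> N \<Longrightarrow> d x \<le> d a \<Longrightarrow> x \<in> S"
  shows "\<exists>x\<in>N. d x = (INF y\<in>N. d y)"
proof -
  obtain x where x: "x \<in> S" "\<And>y. y \<in> S \<Longrightarrow> d x \<le> d y"
    using continuous_attains_inf[OF assms(1) _ assms(3)] assms(4) by blast
  have "d x \<le> d y" if "y \<in> N" for y
    using x sublevel[OF that] \<open>a \<in> S\<close> by force
  then have "(INF y\<in>N. d y) = d x"
    using x(1) assms(2) by (intro cInf_eq_minimum) auto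
  then show ?thesis
    using x(1) assms(2) by auto
qed

lemma finite_tensor_idx:
  "(\<And>j. j < k \<Longrightarrow> finite (P j)) \<Longrightarrow> finite (tensor_idx k P)"
  unfolding tensor_idx_def by (intro finite_PiE) auto

lemma abs_le_frob:
  assumes "finite (tensor_idx k P)" "x \<in> tensor_idx k P"
  shows "\<bar>T x\<bar> \<le> frob k P T"
proof -
  have "(T x)\<^sup>2 \<le> (\<Sum>y\<in>tensor_idx k P. (T y)\<^sup>2)"
    using assms by (intro member_le_sum) auto
  then show ?thesis
    unfolding frob_def using real_sqrt_le_mono by fastforce
qed

lemma continuous_on_frob_diff: "continuous_on UNIV (\<lambda>\<theta>. frob k P (T - \<theta>))"
  unfolding frob_def fun_diff_def
  by (intro continuous_intros continuous_on_product_coordinates)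

lemma compact_order_cone_bounded: "compact (order_cone Q le \<inter> {f. \<forall>a\<in>Q. f a \<le> c})"
proof -
  define order_preserving where
    "order_preserving = {f :: 'a \<Rightarrow> real. \<forall>a b. a \<in> Q \<and> b \<in> Q \<and> (a, b) \<in> le \<longrightarrow> f a \<le> f b}"
  have "order_cone Q le \<inter> {f. \<forall>a\<in>Q. f a \<le> c} = PiE Q (\<lambda>_. {0..c}) \<inter> order_preserving"
    unfolding order_cone_def PiE_def Pi_def order_preserving_def by auto
  moreover have "compact (PiE Q (\<lambda>_. {0..c::real}))"
    by (rule compact_PiE_fun) simp
  moreover have "closed order_preserving"
    unfolding order_preserving_def
    by (intro closed_Collect_all closed_Collect_imp open_Collect_const closed_Collect_le
        continuous_on_product_coordinates)
  ultimately show ?thesis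
    by (simp add: compact_Int_closed)
qed

lemma zero_in_order_cone: "restrict (\<lambda>_. 0 :: real) Q \<in> order_cone Q le"
  by (auto simp: order_cone_def)

lemma order_cone_scale:
  assumes "f \<in> order_cone Q le" "0 \<le> c"
  shows "restrict (\<lambda>a. c * f a) Q \<in> order_cone Q le"
  using assms by (auto simp: order_cone_def intro: mult_left_mono)

lemma prod_Max_le:
  fixes u :: "nat \<Rightarrow> 'a \<Rightarrow> real"
  assumes fin: "\<And>j. j < k \<Longrightarrow> finite (P j)" and nonempty: "\<And>j. j < k \<Longrightarrow> P j \<noteq> {}"
    and bounded: "\<And>x. x \<in> tensor_idx k P \<Longrightarrow> (\<Prod>j<k. u j (x j)) \<le> M"
  shows "(\<Prod>j<k. Max (u j ` P j)) \<le> M"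
proof -
  have "\<exists>a\<in>P j. u j a = Max (u j ` P j)" if "j < k" for j
  proof -
    have "Max (u j ` P j) \<in> u j ` P j"
      using fin[OF that] nonempty[OF that] by (intro Max_in) auto
    then show ?thesis
      by auto
  qed
  then obtain top where top: "\<And>j. j < k \<Longrightarrow> top j \<in> P j \<and> u j (top j) = Max (u j ` P j)"
    by metis
  have "restrict top {..<k} \<in> tensor_idx k P"
    using top by (auto simp: tensor_idx_def)
  then have "(\<Prod>j<k. u j (restrict top {..<k} j)) \<le> M"
    by (rule bounded)
  moreover have "(\<Prod>j<k. u j (restrict top {..<k} j)) = (\<Prod>j<k. Max (u j ` P j))"
    using top by (intro prod.cong) auto
  ultimately show ?thesis
    by simp
qed

lemma prod_rescale:
  assumes "(\<Prod>j<k. s j) = 1" "x \<in> tensor_idx k P"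
  shows "(\<Prod>j<k. restrict (\<lambda>a. s j * u j a) (P j) (x j)) = (\<Prod>j<k. u j (x j))"
  using assms by (simp add: tensor_idx_def PiE_iff prod.distrib)

lemma rank_one_rescale_nonzero:
  assumes fin: "\<And>j. j < k \<Longrightarrow> finite (P j)"
    and u: "\<And>j. j < k \<Longrightarrow> u j \<in> order_cone (P j) (le j)"
    and nonzero: "\<And>j. j < k \<Longrightarrow> \<exists>a\<in>P j. u j a \<noteq> 0"
    and bounded: "\<And>x. x \<in> tensor_idx k P \<Longrightarrow> (\<Prod>j<k. u j (x j)) \<le> M"
  obtains w where "\<And>j. j < k \<Longrightarrow> w j \<in> order_cone (P j) (le j) \<inter> {f. \<forall>a\<in>P j. f a \<le> max 1 M}"
    and "\<And>x. x \<in> tensor_idx k P \<Longrightarrow> (\<Prod>j<k. w j (x j)) = (\<Prod>j<k. u j (x j))"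
proof -
  define m where "m j = Max (u j ` P j)" for j
  have u_nonneg: "0 \<le> u j a" if "j < k" "a \<in> P j" for j a
    using u[OF that(1)] that(2) by (auto simp: order_cone_def)
  have u_le_m: "u j a \<le> m j" if "j < k" "a \<in> P j" for j a
    unfolding m_def using fin[OF that(1)] that(2) by (intro Max_ge) auto
  have m_pos: "0 < m j" if "j < k" for j
    using nonzero[OF that] u_nonneg[OF that] u_le_m[OF that] by fastforce
  define \<mu> where "\<mu> = (\<Prod>j<k. m j)"
  have "\<mu> \<le> M"
    unfolding \<mu>_def m_def using fin nonzero bounded by (intro prod_Max_le) auto
  have "0 < \<mu>"
    unfolding \<mu>_def using m_pos by (intro prod_pos) simp
  txt \<open>Normalise every factor to maximum 1 and put the total scale \<open>\<mu>\<close> on factor 0.\<close>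
  define c where "c j = (if j = 0 then \<mu> else 1)" for j :: nat
  have c_bounds: "0 \<le> c j" "c j \<le> max 1 M" for j
    using \<open>\<mu> \<le> M\<close> \<open>0 < \<mu>\<close> by (auto simp: c_def)
  have c_prod: "(\<Prod>j<k. c j) = \<mu>"
    by (cases k) (auto simp: c_def \<mu>_def prod.lessThan_Suc_shift)
  define s where "s j = c j / m j" for j
  have "(\<Prod>j<k. s j) = (\<Prod>j<k. c j) / (\<Prod>j<k. m j)"
    by (simp add: s_def prod_dividef)
  also have "\<dots> = 1"
    unfolding c_prod \<mu>_def[symmetric] using \<open>0 < \<mu>\<close> by simp
  finally have s_prod: "(\<Prod>j<k. s j) = 1" .
  have s_nonneg: "0 \<le> s j" if "j < k" for j
    using m_pos[OF that] c_bounds(1) by (simp add: s_def)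
  have s_bound: "s j * u j a \<le> max 1 M" if "j < k" "a \<in> P j" for j a
  proof -
    have "u j a / m j \<le> 1"
      using u_le_m[OF that] m_pos[OF that(1)] by simp
    then have "c j * (u j a / m j) \<le> c j"
      using c_bounds(1) by (rule mult_left_le)
    then show ?thesis
      using c_bounds(2)[of j] by (simp add: s_def)
  qed
  show ?thesis
  proof (rule that)
    show "restrict (\<lambda>a. s j * u j a) (P j) \<in> order_cone (P j) (le j) \<inter> {f. \<forall>a\<in>P j. f a \<le> max 1 M}"
      if "j < k" for j
      using order_cone_scale[OF u[OF that] s_nonneg[OF that]] s_bound[OF that] by simp
    show "(\<Prod>j<k. restrict (\<lambda>a. s j * u j a) (P j) (x j)) = (\<Prod>j<k. u j (x j))"
      if "x \<in> tensor_idx k P" for x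
      using s_prod that by (rule prod_rescale)
  qed
qed

lemma rank_one_rescale:
  assumes fin: "\<And>j. j < k \<Longrightarrow> finite (P j)"
    and u: "\<And>j. j < k \<Longrightarrow> u j \<in> order_cone (P j) (le j)"
    and bounded: "\<And>x. x \<in> tensor_idx k P \<Longrightarrow> (\<Prod>j<k. u j (x j)) \<le> M"
  obtains w where "\<And>j. j < k \<Longrightarrow> w j \<in> order_cone (P j) (le j) \<inter> {f. \<forall>a\<in>P j. f a \<le> max 1 M}"
    and "\<And>x. x \<in> tensor_idx k P \<Longrightarrow> (\<Prod>j<k. w j (x j)) = (\<Prod>j<k. u j (x j))"
proof (cases "\<exists>j<k. \<forall>a\<in>P j. u j a = 0")
  case True
  then obtain j0 where j0: "j0 < k" "\<forall>a\<in>P j0. u j0 a = 0"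
    by blast
  show ?thesis
  proof (rule that)
    show "restrict (\<lambda>_. 0) (P j) \<in> order_cone (P j) (le j) \<inter> {f. \<forall>a\<in>P j. f a \<le> max 1 M}" for j
      using zero_in_order_cone by auto
    show "(\<Prod>j<k. restrict (\<lambda>_. 0) (P j) (x j)) = (\<Prod>j<k. u j (x j))"
      if "x \<in> tensor_idx k P" for x
    proof -
      have "x j0 \<in> P j0"
        using that j0(1) by (auto simp: tensor_idx_def)
      then show ?thesis
        using j0 by (simp add: prod_zero bexI[of _ j0])
    qed
  qed
next
  case False
  then show ?thesis
    using rank_one_rescale_nonzero[OF fin u _ bounded] that by blast
qed

definition outer_product_sum ::
    "nat \<Rightarrow> (nat \<Rightarrow> 'a set) \<Rightarrow> nat \<Rightarrow> (nat \<Rightarrow> nat \<Rightarrow> 'a \<Rightarrow> real) \<Rightarrow> (nat \<Rightarrow> 'a) \<Rightarrow> real" where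
  "outer_product_sum k P r v =
     (\<lambda>x. if x \<in> tensor_idx k P then (\<Sum>i<r. \<Prod>j<k. v i j (x j)) else 0)"

definition bounded_factors ::
    "nat \<Rightarrow> (nat \<Rightarrow> 'a set) \<Rightarrow> (nat \<Rightarrow> ('a \<times> 'a) set) \<Rightarrow> nat \<Rightarrow> real
     \<Rightarrow> (nat \<Rightarrow> nat \<Rightarrow> 'a \<Rightarrow> real) set" where
  "bounded_factors k P le r c =
     PiE {..<r} (\<lambda>_. PiE {..<k} (\<lambda>j. order_cone (P j) (le j) \<inter> {f. \<forall>a\<in>P j. f a \<le> c}))"

lemma N_le_eq_image:
  "N_le k P le r =
     outer_product_sum k P r ` {v. \<forall>i<r. \<forall>j<k. v i j \<in> order_cone (P j) (le j)}"
  unfolding N_le_def outer_product_sum_def by blast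

lemma N_le_nonempty: "N_le k P le r \<noteq> {}"
proof -
  have "outer_product_sum k P r (\<lambda>i j. restrict (\<lambda>_. 0) (P j)) \<in> N_le k P le r"
    unfolding N_le_eq_image by (rule imageI) (use zero_in_order_cone in blast)
  then show ?thesis
    by blast
qed

lemma continuous_on_outer_product_sum: "continuous_on UNIV (outer_product_sum k P r)"
proof -
  have "continuous_on UNIV (\<lambda>v :: nat \<Rightarrow> nat \<Rightarrow> 'a \<Rightarrow> real. v i j a)" for i j a
    using continuous_on_product_coordinates
    by (intro continuous_on_product_then_coordinatewise[where f = "\<lambda>v. v i j"]
        continuous_on_product_then_coordinatewise[where f = "\<lambda>v. v i"])
  then have "continuous_on UNIV (\<lambda>v. outer_product_sum k P r v x)" for x
    by (cases "x \<in> tensor_idx k P") (auto simp: outer_product_sum_def intro!: continuous_intros)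
  then show ?thesis
    by (rule continuous_on_coordinatewise_then_product)
qed

lemma compact_outer_product_sum_bounded_factors:
  "compact (outer_product_sum k P r ` bounded_factors k P le r c)"
  unfolding bounded_factors_def
  by (intro compact_continuous_image continuous_on_subset[OF continuous_on_outer_product_sum]
      compact_PiE_fun compact_order_cone_bounded) auto

lemma outer_product_sum_bounded_factors_subset:
  "outer_product_sum k P r ` bounded_factors k P le r c \<subseteq> N_le k P le r"
  unfolding N_le_eq_image bounded_factors_def by (intro image_mono) auto

lemma N_le_bounded_subset:
  assumes fin: "\<And>j. j < k \<Longrightarrow> finite (P j)"
  shows "N_le k P le r \<inter> {\<theta>. \<forall>x\<in>tensor_idx k P. \<theta> x \<le> M}
           \<subseteq> outer_product_sum k P r ` bounded_factors k P le r (max 1 M)"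
proof
  fix \<theta> assume \<theta>: "\<theta> \<in> N_le k P le r \<inter> {\<theta>. \<forall>x\<in>tensor_idx k P. \<theta> x \<le> M}"
  then obtain v where v: "\<And>i j. i < r \<Longrightarrow> j < k \<Longrightarrow> v i j \<in> order_cone (P j) (le j)"
    and \<theta>_eq: "\<theta> = outer_product_sum k P r v"
    unfolding N_le_eq_image by blast
  have term_le: "(\<Prod>j<k. v i j (x j)) \<le> M" if "i < r" "x \<in> tensor_idx k P" for i x
  proof -
    have "0 \<le> v i' j (x j)" if "i' < r" "j < k" for i' j
      using v[OF that] \<open>x \<in> tensor_idx k P\<close> that(2)
      by (auto simp: order_cone_def tensor_idx_def)
    then have "(\<Prod>j<k. v i j (x j)) \<le> (\<Sum>i<r. \<Prod>j<k. v i j (x j))"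
      using \<open>i < r\<close> by (intro member_le_sum prod_nonneg) auto
    also have "\<dots> = \<theta> x"
      using that by (simp add: \<theta>_eq outer_product_sum_def)
    also have "\<dots> \<le> M"
      using \<theta> that by blast
    finally show ?thesis .
  qed
  define rescaled where "rescaled i w \<longleftrightarrow>
      (\<forall>j<k. w j \<in> order_cone (P j) (le j) \<inter> {f. \<forall>a\<in>P j. f a \<le> max 1 M}) \<and>
      (\<forall>x\<in>tensor_idx k P. (\<Prod>j<k. w j (x j)) = (\<Prod>j<k. v i j (x j)))" for i w
  have "\<exists>w. rescaled i w" if ir: "i < r" for i
  proof -
    obtain w where "\<And>j. j < k \<Longrightarrow> w j \<in> order_cone (P j) (le j) \<inter> {f. \<forall>a\<in>P j. f a \<le> max 1 M}"
      and "\<And>x. x \<in> tensor_idx k P \<Longrightarrow> (\<Prod>j<k. w j (x j)) = (\<Prod>j<k. v i j (x j))"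
      using rank_one_rescale[of k P "v i" le M, OF fin v[OF ir] term_le[OF ir]] by blast
    then show ?thesis
      unfolding rescaled_def by blast
  qed
  then obtain W where "\<And>i. i < r \<Longrightarrow> rescaled i (W i)"
    by metis
  then have W: "\<And>i j. i < r \<Longrightarrow> j < k \<Longrightarrow>
                  W i j \<in> order_cone (P j) (le j) \<inter> {f. \<forall>a\<in>P j. f a \<le> max 1 M}"
    and W_prod: "\<And>i x. i < r \<Longrightarrow> x \<in> tensor_idx k P \<Longrightarrow>
                  (\<Prod>j<k. W i j (x j)) = (\<Prod>j<k. v i j (x j))"
    unfolding rescaled_def by blast+
  define w where "w = restrict (\<lambda>i. restrict (W i) {..<k}) {..<r}"
  have "w \<in> bounded_factors k P le r (max 1 M)"
    using W by (simp add: w_def bounded_factors_def)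
  moreover have "\<theta> = outer_product_sum k P r w"
  proof -
    have "(\<Prod>j<k. w i j (x j)) = (\<Prod>j<k. v i j (x j))"
      if "i < r" "x \<in> tensor_idx k P" for i x
    proof -
      have "(\<Prod>j<k. w i j (x j)) = (\<Prod>j<k. W i j (x j))"
        using \<open>i < r\<close> by (intro prod.cong) (simp_all add: w_def)
      then show ?thesis
        using W_prod[OF that] by simp
    qed
    then show ?thesis
      by (auto simp: \<theta>_eq outer_product_sum_def intro!: sum.cong)
  qed
  ultimately show "\<theta> \<in> outer_product_sum k P r ` bounded_factors k P le r (max 1 M)"
    by blast
qed

lemma closed_N_le:
  assumes fin: "\<And>j. j < k \<Longrightarrow> finite (P j)"
  shows "closed (N_le k P le r)"
proof (rule closed_if_locally_closed)
  fix \<theta>\<^sub>0 assume "\<theta>\<^sub>0 \<notin> N_le k P le r"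
  define M where "M = frob k P \<theta>\<^sub>0 + 1"
  define U where "U = {\<theta> :: (nat \<Rightarrow> 'a) \<Rightarrow> real. \<forall>x\<in>tensor_idx k P. \<theta> x < M}"
  define C where "C = outer_product_sum k P r ` bounded_factors k P le r (max 1 M)"
  have finI: "finite (tensor_idx k P)"
    using fin by (rule finite_tensor_idx)
  have "open U"
    using product_topology_basis'[OF finI, of "\<lambda>_. {..<M}" id]
    by (simp add: U_def)
  moreover have "\<theta>\<^sub>0 \<in> U"
  proof -
    have "\<theta>\<^sub>0 x < M" if "x \<in> tensor_idx k P" for x
      using abs_le_frob[OF finI that, of "\<theta>\<^sub>0"] abs_ge_self[of "\<theta>\<^sub>0 x"] unfolding M_def
      by linarith
    then show ?thesis
      by (simp add: U_def)
  qed
  moreover have "N_le k P le r \<inter> U \<subseteq> C"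
    using N_le_bounded_subset[of k P le r M, OF fin] by (force simp: U_def C_def)
  moreover have "closed C" "C \<subseteq> N_le k P le r"
    unfolding C_def
    by (simp_all add: compact_imp_closed_fun compact_outer_product_sum_bounded_factors
        outer_product_sum_bounded_factors_subset)
  ultimately show "\<exists>U C. open U \<and> \<theta>\<^sub>0 \<in> U \<and> closed C \<and> N_le k P le r \<inter> U \<subseteq> C \<and> C \<subseteq> N_le k P le r"
    by blast
qed

lemma N_le_attains_dist:
  assumes fin: "\<And>j. j < k \<Longrightarrow> finite (P j)"
  shows "\<exists>\<theta>\<in>N_le k P le r. frob k P (T - \<theta>) = (INF \<theta>'\<in>N_le k P le r. frob k P (T - \<theta>'))"
proof -
  define d where "d \<theta> = frob k P (T - \<theta>)" for \<theta>
  obtain a where a: "a \<in> N_le k P le r"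
    using N_le_nonempty by blast
  have finI: "finite (tensor_idx k P)"
    using fin by (rule finite_tensor_idx)
  define M where "M = frob k P T + d a"
  define C where "C = outer_product_sum k P r ` bounded_factors k P le r (max 1 M)"
  have sublevel: "\<theta> \<in> C" if "\<theta> \<in> N_le k P le r" "d \<theta> \<le> d a" for \<theta>
  proof -
    have "\<theta> x \<le> M" if "x \<in> tensor_idx k P" for x
    proof -
      have "\<bar>T x - \<theta> x\<bar> \<le> d \<theta>"
        using abs_le_frob[OF finI that, of "T - \<theta>"] by (simp add: d_def)
      moreover have "\<bar>T x\<bar> \<le> frob k P T"
        using abs_le_frob[OF finI that] .
      ultimately show ?thesis
        using \<open>d \<theta> \<le> d a\<close> by (simp add: M_def abs_le_iff)
    qed
    then show ?thesis
      using N_le_bounded_subset[of k P le r M, OF fin] \<open>\<theta> \<in> N_le k P le r\<close> by (auto simp: C_def)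
  qed
  have "\<exists>\<theta>\<in>N_le k P le r. d \<theta> = (INF \<theta>'\<in>N_le k P le r. d \<theta>')"
  proof (rule attains_Inf_if_compact_sublevel)
    show "compact C" "C \<subseteq> N_le k P le r"
      unfolding C_def
      by (simp_all add: compact_outer_product_sum_bounded_factors outer_product_sum_bounded_factors_subset)
    show "continuous_on C d"
      unfolding d_def by (rule continuous_on_subset[OF continuous_on_frob_diff]) simp
  qed (use a sublevel in auto)
  then show ?thesis
    by (simp add: d_def)
qed

theorem theorem13:
  fixes k r :: nat and P :: "nat \<Rightarrow> 'a set" and le :: "nat \<Rightarrow> ('a \<times> 'a) set"
  assumes "1 \<le> k" and "1 \<le> r"
    and "\<And>j. j < k \<Longrightarrow> finite (P j)"
    and "\<And>j. j < k \<Longrightarrow> partial_order_on (P j) (le j)"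
  shows "closed (N_le k P le r) \<and>
         (\<forall>T\<in>tensors k P. \<exists>\<theta>\<in>N_le k P le r.
            frob k P (T - \<theta>) = (INF \<theta>'\<in>N_le k P le r. frob k P (T - \<theta>')))"
  using closed_N_le[of k P le r] N_le_attains_dist[of k P le r] assms(3) by blast

end
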